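(* Let $m, n$ be positive integers, let $f: V(H_{n,m}) \rightarrow \{-1,1\}$ be a function, and let $q = \frac{f(V(H_{n,m}))}{n}$ and $k = \lceil q \rceil$. Then $H_{n,m}$ can be decomposed into $n$ vertex-disjoint directed $m$-paths $P_1, \ldots, P_n$ with \[ f(V(P_j)) \in \begin{cases} \{k - 2, k\}, & \text{if } m \equiv k \pmod 2,\\ \{k-1, k+1\}, & \text{if } m \not\equiv k \pmod 2, \end{cases} \] for all $1 \le j \le n$.
   Context: For a set $Y$ of vertices, $f(Y)=\sum_{y\in Y}f(y)$. $H_{n,m}$ is the directed graph whose vertex set is the disjoint union of $V_1,\dots,V_m$ with $|V_i|=n$, and whose arc set is $\bigcup_{i=1}^{m-1}\{(v,w): v\in V_i, w\in V_{i+1}\}$. A directed $m$-path is a directed path with $m$ vertices. *)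

theory Defs
  imports Complex_Main
begin

definition H_verts :: "nat \<Rightarrow> nat \<Rightarrow> (nat \<times> nat) set" where
  "H_verts n m = {1..m} \<times> {1..n}"

definition H_arcs :: "nat \<Rightarrow> nat \<Rightarrow> ((nat \<times> nat) \<times> (nat \<times> nat)) set" where
  "H_arcs n m = {((i, v), (i', w)). i \<in> {1..<m} \<and> i' = i + 1 \<and> v \<in> {1..n} \<and> w \<in> {1..n}}"

definition is_dipath :: "'a set \<Rightarrow> ('a \<times> 'a) set \<Rightarrow> 'a list \<Rightarrow> bool" where
  "is_dipath V A P \<longleftrightarrow> P \<noteq> [] \<and> distinct P \<and> set P \<subseteq> V \<and>
     (\<forall>i. Suc i < length P \<longrightarrow> (P ! i, P ! Suc i) \<in> A)"

definition fsum :: "('a \<Rightarrow> int) \<Rightarrow> 'a set \<Rightarrow> int" where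
  "fsum f Y = (\<Sum>y\<in>Y. f y)"

end

theory Submission
  imports Defs
begin

text \<open>Build the paths layer by layer, choosing in each layer a bijection between the
  current partial paths and the vertices of the next layer. Inductively all partial path
  weights lie in \<open>{b, b + 2}\<close> for some \<open>b\<close> of the parity of the number of layers: the
  \<open>+1\<close> vertices of the new layer are matched with the paths of weight \<open>b\<close> as far as
  possible, which leaves either no \<open>+1\<close> vertex on a path of weight \<open>b + 2\<close> or no \<open>-1\<close>
  vertex on a path of weight \<open>b\<close>. Finally the average weight \<open>q\<close> lies in \<open>[b, b + 2]\<close>,
  and \<open>k = \<lceil>q\<rceil> = b\<close> forces all weights to equal \<open>b\<close>.\<close>

lemma exists_bij_betw_image_eq:
  assumes "finite X" "finite Y" "card X = card Y"
    and "A \<subseteq> X" "B \<subseteq> Y" "card A = card B"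
  shows "\<exists>h. bij_betw h X Y \<and> h ` A = B"
proof -
  have "finite A" "finite B" using assms finite_subset by auto
  then obtain h1 where h1: "bij_betw h1 A B"
    using assms(6) finite_same_card_bij by blast
  have "card (X - A) = card (Y - B)"
    using assms \<open>finite A\<close> \<open>finite B\<close> by (simp add: card_Diff_subset)
  then obtain h2 where h2: "bij_betw h2 (X - A) (Y - B)"
    using assms(1,2) finite_same_card_bij by blast
  have "bij_betw (\<lambda>x. if x \<in> A then h1 x else h2 x) (A \<union> (X - A)) (B \<union> (Y - B))"
    by (rule bij_betw_disjoint_Un[OF h1 h2]) auto
  moreover have "A \<union> (X - A) = X" "B \<union> (Y - B) = Y" using assms(4,5) by auto
  moreover have "(\<lambda>x. if x \<in> A then h1 x else h2 x) ` A = B"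
    using h1 by (simp add: bij_betw_def)
  ultimately show ?thesis by metis
qed

lemma exists_bij_betw_vimage_subset_or_image_subset:
  assumes "finite X" "finite Y" "card X = card Y" "A \<subseteq> X" "Q \<subseteq> Y"
  shows "\<exists>h. bij_betw h X Y \<and> ((\<forall>x\<in>X. h x \<in> Q \<longrightarrow> x \<in> A) \<or> h ` A \<subseteq> Q)"
proof (cases "card Q \<le> card A")
  case True
  then obtain A' where A': "A' \<subseteq> A" "card A' = card Q"
    by (metis obtain_subset_with_card_n)
  then obtain h where h: "bij_betw h X Y" "h ` A' = Q"
    using exists_bij_betw_image_eq[of X Y A' Q] assms by auto
  have "x \<in> A'" if "x \<in> X" "h x \<in> Q" for x
    using that h A' assms(4) by (auto simp: bij_betw_def inj_on_def)
  then show ?thesis using h A' by blast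
next
  case False
  then obtain Q' where Q': "Q' \<subseteq> Q" "card Q' = card A"
    by (metis obtain_subset_with_card_n nat_le_linear)
  moreover have "Q' \<subseteq> Y" using Q'(1) assms(5) by blast
  ultimately obtain h where "bij_betw h X Y" "h ` A = Q'"
    using exists_bij_betw_image_eq[OF assms(1-4)] by metis
  then show ?thesis using Q' by blast
qed

lemma add_pm_one_under_bij_two_valued:
  fixes s c :: "'a \<Rightarrow> int"
  assumes "finite V"
    and s: "\<forall>j\<in>V. s j \<in> {b, b + 2}" and c: "\<forall>v\<in>V. c v \<in> {-1, 1}"
  shows "\<exists>h b'. bij_betw h V V \<and> b' \<in> {b - 1, b + 1} \<and>
           (\<forall>j\<in>V. s j + c (h j) \<in> {b', b' + 2})"
proof -
  define A where "A = {j\<in>V. s j = b}"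
  define Q where "Q = {v\<in>V. c v = 1}"
  obtain h where h: "bij_betw h V V"
    and hA: "(\<forall>j\<in>V. h j \<in> Q \<longrightarrow> j \<in> A) \<or> h ` A \<subseteq> Q"
    using exists_bij_betw_vimage_subset_or_image_subset[of V V A Q] assms(1)
    unfolding A_def Q_def by auto
  have hV: "h j \<in> V" if "j \<in> V" for j using h that bij_betwE by blast
  from hA show ?thesis
  proof
    assume "\<forall>j\<in>V. h j \<in> Q \<longrightarrow> j \<in> A"
    then have "\<forall>j\<in>V. s j + c (h j) \<in> {b - 1, b + 1}"
      using s c hV by (fastforce simp: A_def Q_def)
    then show ?thesis using h by (intro exI[of _ h] exI[of _ "b - 1"]) auto
  next
    assume "h ` A \<subseteq> Q"
    then have "\<forall>j\<in>V. s j + c (h j) \<in> {b + 1, b + 3}"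
      using s c hV by (fastforce simp: A_def Q_def)
    then show ?thesis using h by (intro exI[of _ h] exI[of _ "b + 1"]) auto
  qed
qed

lemma exists_layer_bijections_two_valued_column_sums:
  fixes w :: "nat \<Rightarrow> 'a \<Rightarrow> int"
  assumes "finite V" and "\<forall>i\<in>{1..m}. \<forall>v\<in>V. w i v \<in> {-1, 1}"
  shows "\<exists>g b. (\<forall>i\<in>{1..m}. bij_betw (g i) V V) \<and>
           (\<forall>j\<in>V. (\<Sum>i=1..m. w i (g i j)) \<in> {b, b + 2}) \<and> b mod 2 = int m mod 2"
  using assms(2)
proof (induction m)
  case 0
  show ?case by (intro exI[of _ "\<lambda>i j. j"] exI[of _ 0]) auto
next
  case (Suc m)
  then obtain g b where g: "\<forall>i\<in>{1..m}. bij_betw (g i) V V"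
    and two_valued: "\<forall>j\<in>V. (\<Sum>i=1..m. w i (g i j)) \<in> {b, b + 2}"
    and parity: "b mod 2 = int m mod 2"
    by auto
  obtain h b' where h: "bij_betw h V V" and b': "b' \<in> {b - 1, b + 1}"
    and step: "\<forall>j\<in>V. (\<Sum>i=1..m. w i (g i j)) + w (Suc m) (h j) \<in> {b', b' + 2}"
    using add_pm_one_under_bij_two_valued[OF assms(1) two_valued, of "w (Suc m)"] Suc.prems
    by auto
  define g' where "g' = g(Suc m := h)"
  have "(\<Sum>i=1..Suc m. w i (g' i j)) = (\<Sum>i=1..m. w i (g i j)) + w (Suc m) (h j)" for j
    by (simp add: g'_def)
  moreover have "\<forall>i\<in>{1..Suc m}. bij_betw (g' i) V V"
    using g h by (auto simp: g'_def le_Suc_eq)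
  moreover have "b' mod 2 = int (Suc m) mod 2" using b' parity by auto presburger+
  ultimately show ?case using step by metis
qed

lemma mem_two_values_around_ceiling_mean:
  fixes s :: "'a \<Rightarrow> int"
  assumes "finite J" "J \<noteq> {}"
    and two_valued: "\<forall>j\<in>J. s j \<in> {b, b + 2}" and parity: "b mod 2 = p mod 2"
    and k: "k = \<lceil>real_of_int (sum s J) / real (card J)\<rceil>"
    and "j \<in> J"
  shows "s j \<in> (if p mod 2 = k mod 2 then {k - 2, k} else {k - 1, k + 1})"
proof -
  have card_pos: "real (card J) > 0" using assms(1,2) by (simp add: card_gt_0_iff)
  have "of_int (int (card J) * b) \<le> real_of_int (sum s J)"
    "real_of_int (sum s J) \<le> of_int (int (card J) * (b + 2))"
    unfolding of_int_le_iff using two_valued by (auto intro!: sum_bounded_below sum_bounded_above)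
  then have "real_of_int b \<le> real_of_int (sum s J) / real (card J)"
    "real_of_int (sum s J) / real (card J) \<le> real_of_int (b + 2)"
    using card_pos by (simp_all add: field_simps del: of_int_sum)
  then have "b \<le> k" "k \<le> b + 2" unfolding k by (simp_all add: le_ceiling_iff ceiling_le_iff)
  then consider "k = b" | "k = b + 1" | "k = b + 2" by linarith
  then show ?thesis
  proof cases
    case 1
    have "s j = b"
    proof (rule ccontr)
      assume "s j \<noteq> b"
      then have "b < s j" using two_valued \<open>j \<in> J\<close> by auto
      then have "sum (\<lambda>_. b) J < sum s J"
        using two_valued \<open>j \<in> J\<close> assms(1) by (intro sum_strict_mono_ex1) auto
      then have "of_int (int (card J) * b) < real_of_int (sum s J)"
        unfolding of_int_less_iff by simp
      then have "real_of_int b < real_of_int (sum s J) / real (card J)"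
        using card_pos by (simp add: field_simps del: of_int_sum)
      then show False using 1 unfolding k by linarith
    qed
    then show ?thesis using 1 parity by simp
  qed (use two_valued \<open>j \<in> J\<close> parity in \<open>auto; presburger\<close>)+
qed

definition layer_path :: "(nat \<Rightarrow> 'a \<Rightarrow> 'b) \<Rightarrow> nat \<Rightarrow> 'a \<Rightarrow> (nat \<times> 'b) list" where
  "layer_path g m j = map (\<lambda>i. (i, g i j)) [1..<Suc m]"

lemma length_layer_path [simp]: "length (layer_path g m j) = m"
  by (simp add: layer_path_def)

lemma set_layer_path: "set (layer_path g m j) = (\<lambda>i. (i, g i j)) ` {1..m}"
  by (auto simp: layer_path_def)

lemma is_dipath_layer_path:
  assumes "m \<ge> 1" and "\<forall>i\<in>{1..m}. g i j \<in> {1..n}"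
  shows "is_dipath (H_verts n m) (H_arcs n m) (layer_path g m j)"
  unfolding is_dipath_def
proof (intro conjI allI impI)
  show "layer_path g m j \<noteq> []" using assms(1) by (simp add: layer_path_def)
  show "distinct (layer_path g m j)" by (simp add: layer_path_def distinct_map inj_on_def)
  show "set (layer_path g m j) \<subseteq> H_verts n m"
    using assms(2) by (auto simp: set_layer_path H_verts_def)
  fix i assume "Suc i < length (layer_path g m j)"
  then have "Suc i < m" by simp
  then show "(layer_path g m j ! i, layer_path g m j ! Suc i) \<in> H_arcs n m"
    using assms(2) by (simp add: layer_path_def H_arcs_def del: upt_Suc)
qed

lemma layer_paths_disjoint_iff:
  "set (layer_path g m j) \<inter> set (layer_path g m j') = {} \<longleftrightarrow> (\<forall>i\<in>{1..m}. g i j \<noteq> g i j')"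
  by (auto simp: set_layer_path)

lemma UN_layer_paths:
  assumes "\<forall>i\<in>{1..m}. g i ` J = V"
  shows "(\<Union>j\<in>J. set (layer_path g m j)) = {1..m} \<times> V"
  using assms by (fastforce simp: set_layer_path)

lemma fsum_layer_path: "fsum f (set (layer_path g m j)) = (\<Sum>i=1..m. f (i, g i j))"
proof -
  have "inj_on (\<lambda>i. (i, g i j)) {1..m}" by (auto simp: inj_on_def)
  then show ?thesis by (simp add: fsum_def set_layer_path sum.reindex)
qed

lemma fsum_product_eq_sum_layer_paths:
  assumes "\<forall>i\<in>{1..m}. bij_betw (g i) J V"
  shows "fsum f ({1..m} \<times> V) = (\<Sum>j\<in>J. fsum f (set (layer_path g m j)))"
proof -
  have "fsum f ({1..m} \<times> V) = (\<Sum>i=1..m. \<Sum>v\<in>V. f (i, v))"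
    by (simp add: fsum_def sum.cartesian_product)
  also have "\<dots> = (\<Sum>i=1..m. \<Sum>j\<in>J. f (i, g i j))"
    using assms by (intro sum.cong refl sum.reindex_bij_betw[symmetric]) auto
  also have "\<dots> = (\<Sum>j\<in>J. fsum f (set (layer_path g m j)))"
    by (subst sum.swap) (simp add: fsum_layer_path)
  finally show ?thesis .
qed

theorem corollary4p5:
  fixes n m :: nat and f :: "nat \<times> nat \<Rightarrow> int"
  assumes "n \<ge> 1" and "m \<ge> 1"
    and "\<forall>x\<in>H_verts n m. f x \<in> {-1, 1}"
  defines "q \<equiv> real_of_int (fsum f (H_verts n m)) / real n"
  defines "k \<equiv> ceiling q"
  shows "\<exists>P :: nat \<Rightarrow> (nat \<times> nat) list.
     (\<forall>j\<in>{1..n}. is_dipath (H_verts n m) (H_arcs n m) (P j) \<and> length (P j) = m) \<and>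
     (\<forall>j\<in>{1..n}. \<forall>j'\<in>{1..n}. j \<noteq> j' \<longrightarrow> set (P j) \<inter> set (P j') = {}) \<and>
     (\<Union>j\<in>{1..n}. set (P j)) = H_verts n m \<and>
     (\<forall>j\<in>{1..n}. fsum f (set (P j)) \<in>
        (if int m mod 2 = k mod 2 then {k - 2, k} else {k - 1, k + 1}))"
proof -
  obtain g b where g: "\<forall>i\<in>{1..m}. bij_betw (g i) {1..n} {1..n}"
    and two_valued: "\<forall>j\<in>{1..n}. (\<Sum>i=1..m. f (i, g i j)) \<in> {b, b + 2}"
    and parity: "b mod 2 = int m mod 2"
    using exists_layer_bijections_two_valued_column_sums[of "{1..n}" m "\<lambda>i v. f (i, v)"] assms(3)
    by (auto simp: H_verts_def)
  define P where "P = layer_path g m"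
  have "fsum f (H_verts n m) = (\<Sum>j\<in>{1..n}. fsum f (set (P j)))"
    unfolding H_verts_def P_def by (rule fsum_product_eq_sum_layer_paths[OF g])
  then have k_eq: "k = \<lceil>real_of_int (\<Sum>j\<in>{1..n}. fsum f (set (P j))) / real (card {1..n})\<rceil>"
    by (simp only: k_def q_def card_atLeastAtMost diff_Suc_1)
  have column_sums: "\<forall>j\<in>{1..n}. fsum f (set (P j)) \<in> {b, b + 2}"
    using two_valued by (simp add: P_def fsum_layer_path)
  have weights:
    "fsum f (set (P j)) \<in> (if int m mod 2 = k mod 2 then {k - 2, k} else {k - 1, k + 1})"
    if "j \<in> {1..n}" for j
    using assms(1) by (intro mem_two_values_around_ceiling_mean[OF _ _ column_sums parity k_eq that]) auto
  have "\<forall>i\<in>{1..m}. g i j \<in> {1..n}" if "j \<in> {1..n}" for j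
    using g that bij_betwE by blast
  then have "\<forall>j\<in>{1..n}. is_dipath (H_verts n m) (H_arcs n m) (P j)"
    using assms(2) by (simp add: P_def is_dipath_layer_path)
  moreover have "\<forall>j\<in>{1..n}. \<forall>j'\<in>{1..n}. j \<noteq> j' \<longrightarrow> set (P j) \<inter> set (P j') = {}"
    using g unfolding P_def layer_paths_disjoint_iff by (meson bij_betw_imp_inj_on inj_on_contraD)
  moreover have "(\<Union>j\<in>{1..n}. set (P j)) = H_verts n m"
    unfolding P_def H_verts_def using g by (intro UN_layer_paths) (simp add: bij_betw_def)
  ultimately show ?thesis using weights by (intro exI[of _ P]) (simp add: P_def)
qed

end
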